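(* For arbitrarily large integers $n$ there exists a family $\mathcal{F}$ of subsets of $[n]$ with $|\mathcal{F}|\ge 8n/3$ having the following two properties: (i) every $A\in\mathcal{F}$ has odd cardinality; (ii) there are no distinct $A,B,C\in\mathcal{F}$ such that $|A\cap B|$, $|A\cap C|$ and $|B\cap C|$ are all odd. *)

theory Defs
  imports Main
begin

end

theory Submission imports Defs begin

text \<open>A single family of 16 odd sets on a 6-element ground set with no odd triangle already
  has density 16/6 = 8/3. Placing disjoint translated copies of it side by side preserves both
  properties, since members of different copies meet in the empty set, so an odd triangle
  would have to live inside one copy.\<close>

definition odd_triangle_free :: "'a set set \<Rightarrow> bool" where
  "odd_triangle_free F \<longleftrightarrow>
     \<not> (\<exists>A\<in>F. \<exists>B\<in>F. \<exists>C\<in>F. A \<noteq> B \<and> A \<noteq> C \<and> B \<noteq> C \<and>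
          odd (card (A \<inter> B)) \<and> odd (card (A \<inter> C)) \<and> odd (card (B \<inter> C)))"

lemma odd_triangle_free_image:
  assumes "inj f" and "odd_triangle_free F"
  shows "odd_triangle_free (image f ` F)"
proof -
  have card_inter: "card (f ` A \<inter> f ` B) = card (A \<inter> B)" for A B
    using \<open>inj f\<close> by (simp add: image_Int[symmetric] card_image inj_on_subset)
  have "inj (image f)"
    using \<open>inj f\<close> by (simp add: inj_def inj_image_eq_iff)
  then show ?thesis
    using assms(2) unfolding odd_triangle_free_def
    by (auto simp: card_inter inj_eq)
qed

lemma odd_triangle_free_UN_disjoint:
  assumes free: "\<And>i. i \<in> I \<Longrightarrow> odd_triangle_free (F i)"
    and disjoint: "\<And>i j A B. i \<in> I \<Longrightarrow> j \<in> I \<Longrightarrow> i \<noteq> j \<Longrightarrow> A \<in> F i \<Longrightarrow> B \<in> F j \<Longrightarrow> A \<inter> B = {}"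
  shows "odd_triangle_free (\<Union>i\<in>I. F i)"
  unfolding odd_triangle_free_def
proof clarify
  fix i j l A B C
  assume members: "i \<in> I" "j \<in> I" "l \<in> I" "A \<in> F i" "B \<in> F j" "C \<in> F l"
    and distinct: "A \<noteq> B" "A \<noteq> C" "B \<noteq> C"
    and odd: "odd (card (A \<inter> B))" "odd (card (A \<inter> C))" "odd (card (B \<inter> C))"
  have "A \<inter> B \<noteq> {}" "A \<inter> C \<noteq> {}"
    using odd(1,2) by auto
  then have "j = i" "l = i"
    using disjoint members by blast+
  then show False
    using free[OF \<open>i \<in> I\<close>] members distinct odd unfolding odd_triangle_free_def by blast
qed

definition base_family :: "nat set set" where
  "base_family = {{1}, {2}, {3}, {4}, {5}, {1,2,3,4,5},
     {1,2,6}, {1,3,6}, {2,3,6}, {1,4,6}, {2,4,6}, {3,4,6}, {1,5,6}, {2,5,6}, {3,5,6}, {4,5,6}}"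

lemma odd_triangle_free_base_family: "odd_triangle_free base_family"
  unfolding odd_triangle_free_def base_family_def by code_simp

lemma card_base_family: "card base_family = 16"
  unfolding base_family_def by code_simp

lemma base_family_odd: "\<forall>A\<in>base_family. odd (card A)"
  unfolding base_family_def by code_simp

lemma base_family_subset: "\<forall>A\<in>base_family. A \<noteq> {} \<and> A \<subseteq> {1..6}"
  unfolding base_family_def by code_simp

definition block :: "nat \<Rightarrow> nat set set" where
  "block j = image ((+) (6 * j)) ` base_family"

lemma block_subset: "A \<in> block j \<Longrightarrow> A \<subseteq> {6 * j + 1..6 * j + 6}"
  unfolding block_def using base_family_subset by fastforce

lemma block_nonempty: "A \<in> block j \<Longrightarrow> A \<noteq> {}"
  unfolding block_def using base_family_subset by auto

lemma block_disjoint: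
  assumes "j \<noteq> j'" "A \<in> block j" "B \<in> block j'"
  shows "A \<inter> B = {}"
proof -
  have "{6 * j + 1..6 * j + 6} \<inter> {6 * j' + 1..6 * j' + 6} = {}"
    using \<open>j \<noteq> j'\<close> by (cases "j < j'") (auto dest!: less_imp_Suc_add)
  then show ?thesis
    using block_subset assms(2,3) by blast
qed

lemma card_block: "card (block j) = 16"
proof -
  have "inj (image ((+) (6 * j)))"
    by (simp add: inj_def inj_image_eq_iff)
  then show ?thesis
    unfolding block_def by (simp add: card_image inj_on_subset card_base_family)
qed

lemma block_odd: "A \<in> block j \<Longrightarrow> odd (card A)"
  unfolding block_def using base_family_odd by (auto simp: card_image)

definition blocks :: "nat \<Rightarrow> nat set set" where
  "blocks k = (\<Union>j<k. block j)"

lemma blocks_subset: "blocks k \<subseteq> Pow {1..6 * k}"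
  unfolding blocks_def by (fastforce dest: block_subset)

lemma card_blocks: "card (blocks k) = 16 * k"
proof -
  have "block j \<inter> block j' = {}" if "j \<noteq> j'" for j j'
    using block_disjoint[OF that] block_nonempty by (metis disjoint_iff_not_equal inf.idem)
  moreover have "finite (block j)" for j
    using card_block[of j] by (intro card_ge_0_finite) simp
  ultimately have "card (blocks k) = (\<Sum>j<k. card (block j))"
    unfolding blocks_def by (intro card_UN_disjoint) auto
  then show ?thesis
    by (simp add: card_block)
qed

lemma odd_triangle_free_block: "odd_triangle_free (block j)"
  unfolding block_def by (intro odd_triangle_free_image odd_triangle_free_base_family) simp

lemma odd_triangle_free_blocks: "odd_triangle_free (blocks k)"
  unfolding blocks_def
  by (rule odd_triangle_free_UN_disjoint[OF odd_triangle_free_block block_disjoint])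

theorem lemma4p2:
  shows "\<forall>N::nat. \<exists>n\<ge>N. \<exists>F :: nat set set.
           F \<subseteq> Pow {1..n} \<and>
           3 * card F \<ge> 8 * n \<and>
           (\<forall>A\<in>F. odd (card A)) \<and>
           \<not> (\<exists>A\<in>F. \<exists>B\<in>F. \<exists>C\<in>F. A \<noteq> B \<and> A \<noteq> C \<and> B \<noteq> C \<and>
                 odd (card (A \<inter> B)) \<and> odd (card (A \<inter> C)) \<and> odd (card (B \<inter> C)))"
proof
  fix N :: nat
  have "3 * card (blocks N) \<ge> 8 * (6 * N)"
    by (simp add: card_blocks)
  moreover have "\<forall>A\<in>blocks N. odd (card A)"
    unfolding blocks_def using block_odd by blast
  ultimately show "\<exists>n\<ge>N. \<exists>F :: nat set set. F \<subseteq> Pow {1..n} \<and> 3 * card F \<ge> 8 * n \<and>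
           (\<forall>A\<in>F. odd (card A)) \<and>
           \<not> (\<exists>A\<in>F. \<exists>B\<in>F. \<exists>C\<in>F. A \<noteq> B \<and> A \<noteq> C \<and> B \<noteq> C \<and>
                 odd (card (A \<inter> B)) \<and> odd (card (A \<inter> C)) \<and> odd (card (B \<inter> C)))"
    using blocks_subset odd_triangle_free_blocks[of N, unfolded odd_triangle_free_def]
    by (intro exI[of _ "6 * N"] conjI exI[of _ "blocks N"]) simp_all
qed

end
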